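(* The family $\mathcal A$ of achievement sets contained in $[0,1]$ is closed in $K_0([0,1])$ and in $K([0,1])$, with respect to the Pompeiu–Hausdorff metric.
   Context: For an absolutely convergent real series $\sum_n a_n$, its achievement set is $E(a_n):=\{\sum_{n\in A}a_n:\ A\subset\mathbb N\}$ (a compact set containing $0$). $\mathcal A$ denotes the family of all sets $E(a_n)$, for absolutely convergent real series $\sum a_n$, that are contained in $[0,1]$. $K([0,1])$ is the family of non-empty compact subsets of $[0,1]$ and $K_0([0,1])$ the family of compact subsets of $[0,1]$ containing $0$, both with the Pompeiu–Hausdorff metric $d_H(A,B)=\max\{\sup_{a\in A}\operatorname{dist}(a,B),\sup_{b\in B}\operatorname{dist}(b,A)\}$. *)

theory Defs
  imports "HOL-Analysis.Analysis"
begin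

definition achievement_set :: "(nat \<Rightarrow> real) \<Rightarrow> real set" where
  "achievement_set a = {(\<Sum>n. if n \<in> A then a n else 0) | A. A \<subseteq> (UNIV :: nat set)}"

definition achievement_family :: "real set set" where
  "achievement_family =
     {achievement_set a | a. summable (\<lambda>n. \<bar>a n\<bar>) \<and> achievement_set a \<subseteq> {0..1}}"

definition K01 :: "real set set" where
  "K01 = {K. K \<noteq> {} \<and> compact K \<and> K \<subseteq> {0..1}}"

definition K0_01 :: "real set set" where
  "K0_01 = {K. compact K \<and> K \<subseteq> {0..1} \<and> 0 \<in> K}"

definition hausdorff_dist :: "real set \<Rightarrow> real set \<Rightarrow> real" where
  "hausdorff_dist A B = max (SUP a\<in>A. infdist a B) (SUP b\<in>B. infdist b A)"

definition hclosed_in :: "real set set \<Rightarrow> real set set \<Rightarrow> bool" where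
  "hclosed_in F X \<longleftrightarrow> F \<subseteq> X \<and>
     (\<forall>K\<in>X. (\<forall>e>0. \<exists>E\<in>F. hausdorff_dist K E < e) \<longrightarrow> K \<in> F)"

end

theory Submission
  imports Defs
begin

text \<open>
  Every member of the family is the set of subsums of a nonincreasing nonnegative series
  \<open>\<alpha>\<close>, and as its total is at most \<open>1\<close>, \<open>\<alpha> m \<le> 1/(m+1)\<close>. Given such series
  \<open>\<alpha>\<^sub>k\<close> whose achievement sets converge to \<open>K\<close> in the Hausdorff metric, pass to a
  subsequence along which the terms converge to \<open>a m\<close> and the totals to \<open>s\<close>. The limit
  series \<open>a\<close> may lose the mass \<open>d = s - \<Sum>a\<close> to infinity; since the tails of the
  \<open>\<alpha>\<^sub>k\<close> consist of uniformly small terms, this mass can be realised in any amount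
  between \<open>0\<close> and \<open>d\<close>, so that \<open>K = E(a) + [0,d]\<close>. Interleaving \<open>a\<close> with the series
  \<open>d/2^(n+1)\<close>, whose achievement set is \<open>[0,d]\<close>, exhibits \<open>K\<close> as an achievement set.
\<close>

definition nonneg_summable :: "(nat \<Rightarrow> real) \<Rightarrow> bool" where
  "nonneg_summable a \<longleftrightarrow> (\<forall>n. 0 \<le> a n) \<and> summable a"

lemma nonneg_summable_nonneg: "nonneg_summable a \<Longrightarrow> 0 \<le> a n"
  by (simp add: nonneg_summable_def)

lemma nonneg_summable_iff_summable_on:
  "nonneg_summable a \<longleftrightarrow> (\<forall>n. 0 \<le> a n) \<and> a summable_on UNIV"
  using summable_on_UNIV_nonneg_real_iff by (auto simp: nonneg_summable_def)

lemma nonneg_summable_summable_on: "nonneg_summable a \<Longrightarrow> a summable_on A"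
  by (meson nonneg_summable_iff_summable_on subset_UNIV summable_on_subset_banach)

lemma infsum_nonneg_summable_nonneg: "nonneg_summable a \<Longrightarrow> 0 \<le> infsum a A"
  by (simp add: infsum_nonneg nonneg_summable_nonneg)

lemma infsum_nonneg_summable_mono:
  "nonneg_summable a \<Longrightarrow> A \<subseteq> B \<Longrightarrow> infsum a A \<le> infsum a B"
  by (simp add: infsum_mono2 nonneg_summable_nonneg nonneg_summable_summable_on)

lemma nonneg_summable_sums_infsum:
  assumes "nonneg_summable a"
  shows "a sums infsum a UNIV"
proof -
  have "a sums suminf a"
    using assms by (simp add: nonneg_summable_def summable_sums)
  moreover from this have "infsum a UNIV = suminf a"
    by (intro infsumI sums_nonneg_imp_has_sum) (use assms nonneg_summable_nonneg in auto)
  ultimately show ?thesis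
    by simp
qed

lemma infsum_split_at:
  assumes "nonneg_summable a"
  shows "infsum a A = sum a (A \<inter> {..<n}) + infsum a (A \<inter> {n..})"
proof -
  have "infsum a ((A \<inter> {..<n}) \<union> (A \<inter> {n..})) = infsum a (A \<inter> {..<n}) + infsum a (A \<inter> {n..})"
    using assms by (intro infsum_Un_disjoint nonneg_summable_summable_on) auto
  moreover have "(A \<inter> {..<n}) \<union> (A \<inter> {n..}) = A"
    by auto
  ultimately show ?thesis
    by simp
qed

lemma infsum_atLeast_eq:
  "nonneg_summable a \<Longrightarrow> infsum a {n..} = infsum a UNIV - sum a {..<n}"
  using infsum_split_at[of a UNIV n] by simp

lemma infsum_atLeast_tendsto_0:
  assumes "nonneg_summable a"
  shows "(\<lambda>n. infsum a {n..}) \<longlonglongrightarrow> 0"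
proof -
  have "(\<lambda>n. infsum a UNIV - sum a {..<n}) \<longlonglongrightarrow> infsum a UNIV - infsum a UNIV"
    using nonneg_summable_sums_infsum[OF assms] by (intro tendsto_intros) (simp add: sums_def)
  then show ?thesis
    by (simp add: infsum_atLeast_eq[OF assms])
qed

lemma sum_atLeastLessThan_tendsto_infsum:
  assumes "nonneg_summable a"
  shows "(\<lambda>N. sum a {n..<N}) \<longlonglongrightarrow> infsum a {n..}"
proof -
  have "(\<lambda>N. sum a {..<N} - sum a {..<n}) \<longlonglongrightarrow> infsum a UNIV - sum a {..<n}"
    using nonneg_summable_sums_infsum[OF assms] by (intro tendsto_intros) (simp add: sums_def)
  moreover have "eventually (\<lambda>N. sum a {..<N} - sum a {..<n} = sum a {n..<N}) sequentially"
    using eventually_ge_at_top[of n]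
    by eventually_elim (simp add: sum_diff_nat_ivl flip: atLeast0LessThan)
  ultimately show ?thesis
    unfolding infsum_atLeast_eq[OF assms] by (rule Lim_transform_eventually)
qed

lemma greedy_partial_sum:
  assumes c: "nonneg_summable c" and "h > 0" and small: "\<And>m. n \<le> m \<Longrightarrow> c m \<le> h"
    and "0 \<le> v" "v \<le> infsum c {n..}"
  obtains N where "n \<le> N" "v - h < sum c {n..<N}" "sum c {n..<N} \<le> v"
proof -
  define P where "P N \<longleftrightarrow> n \<le> N \<and> v - h < sum c {n..<N}" for N
  have "eventually (\<lambda>N. v - h < sum c {n..<N}) sequentially"
    using assms by (intro order_tendstoD(1)[OF sum_atLeastLessThan_tendsto_infsum[OF c]]) simp
  then have "eventually P sequentially"
    unfolding P_def using eventually_ge_at_top by (rule eventually_conj[rotated])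
  then obtain N0 where "P N0"
    using eventually_happens'[OF sequentially_bot] by blast
  define N where "N = (LEAST N. P N)"
  have PN: "P N"
    unfolding N_def using \<open>P N0\<close> by (rule LeastI)
  have "sum c {n..<N} \<le> v"
  proof (cases "N = n")
    case True
    with \<open>0 \<le> v\<close> show ?thesis
      by simp
  next
    case False
    with PN obtain M where M: "N = Suc M" "n \<le> M"
      by (cases N) (auto simp: P_def)
    then have "\<not> P M"
      unfolding N_def by (metis lessI not_less_Least)
    with M have "sum c {n..<M} \<le> v - h"
      by (simp add: P_def)
    with M small[of M] show ?thesis
      by simp
  qed
  with PN show thesis
    using that unfolding P_def by blast
qed

section \<open>Achievement sets as ranges of subsums\<close>

lemma achievement_set_eq_range_infsum:
  assumes "summable (\<lambda>n. \<bar>a n\<bar>)"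
  shows "achievement_set a = range (infsum a)"
proof -
  have "(\<Sum>n. if n \<in> A then a n else 0) = infsum a A" for A
  proof -
    let ?g = "\<lambda>n. if n \<in> A then a n else 0"
    have norm: "summable (\<lambda>n. norm (?g n))"
      by (rule summable_comparison_test'[OF assms, where N = 0]) simp
    then have "(?g has_sum suminf ?g) UNIV"
      by (rule norm_summable_imp_has_sum) (rule summable_sums[OF summable_norm_cancel[OF norm]])
    then have "suminf ?g = infsum ?g UNIV"
      by (rule infsumI[symmetric])
    also have "\<dots> = infsum a A"
      by (rule infsum_cong_neutral) auto
    finally show ?thesis .
  qed
  then show ?thesis
    unfolding achievement_set_def by auto
qed

lemma infsum_tendsto_if_eventually_agree:
  assumes a: "nonneg_summable a"
    and agree: "\<And>m. eventually (\<lambda>k. m \<in> A k \<longleftrightarrow> m \<in> L) sequentially"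
  shows "(\<lambda>k. infsum a (A k)) \<longlonglongrightarrow> infsum a L"
  unfolding tendsto_iff
proof (intro allI impI)
  fix e :: real
  assume "e > 0"
  from order_tendstoD(2)[OF infsum_atLeast_tendsto_0[OF a] this]
  obtain n where n: "infsum a {n..} < e"
    by (metis eventually_happens' sequentially_bot)
  have "eventually (\<lambda>k. \<forall>m\<in>{..<n}. m \<in> A k \<longleftrightarrow> m \<in> L) sequentially"
    using agree by (simp add: eventually_ball_finite)
  then show "eventually (\<lambda>k. dist (infsum a (A k)) (infsum a L) < e) sequentially"
  proof eventually_elim
    case (elim k)
    then have "A k \<inter> {..<n} = L \<inter> {..<n}"
      by auto
    then have "infsum a (A k) - infsum a L = infsum a (A k \<inter> {n..}) - infsum a (L \<inter> {n..})"
      using infsum_split_at[OF a, of "A k" n] infsum_split_at[OF a, of L n] by simp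
    moreover have "0 \<le> infsum a (A k \<inter> {n..})" "infsum a (A k \<inter> {n..}) \<le> infsum a {n..}"
      and "0 \<le> infsum a (L \<inter> {n..})" "infsum a (L \<inter> {n..}) \<le> infsum a {n..}"
      using a by (auto intro: infsum_nonneg_summable_nonneg infsum_nonneg_summable_mono)
    ultimately show ?case
      using n unfolding dist_real_def abs_less_iff by linarith
  qed
qed

lemma bounded_seq_pointwise_convergent_subseq:
  fixes f :: "nat \<Rightarrow> 'i::countable \<Rightarrow> real"
  assumes "\<And>k i. \<bar>f k i\<bar> \<le> M"
  obtains r g where "strict_mono r" "\<And>i. (\<lambda>k. f (r k) i) \<longlonglongrightarrow> g i"
proof -
  have "compact (PiE UNIV (\<lambda>_. {-M..M}) :: ('i \<Rightarrow> real) set)"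
    using compactin_PiE[of "\<lambda>_. euclideanreal" UNIV "\<lambda>_. {-M..M}"]
    by (simp add: euclidean_product_topology)
  moreover have "f k \<in> PiE UNIV (\<lambda>_. {-M..M})" for k
    using assms by (auto simp: PiE_iff abs_le_iff minus_le_iff)
  ultimately obtain g r where r: "strict_mono r" and lim: "(f \<circ> r) \<longlonglongrightarrow> g"
    using compact_imp_seq_compact seq_compactE by metis
  have "(\<lambda>k. f (r k) i) \<longlonglongrightarrow> g i" for i
    using lim unfolding comp_def
    by (rule continuous_on_tendsto_compose[OF continuous_on_product_coordinates]) auto
  with r show thesis
    by (rule that)
qed

lemma range_infsum_subset:
  "nonneg_summable a \<Longrightarrow> range (infsum a) \<subseteq> {0..infsum a UNIV}"
  using infsum_nonneg_summable_nonneg infsum_nonneg_summable_mono by fastforce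

lemma closed_range_infsum:
  assumes a: "nonneg_summable a"
  shows "closed (range (infsum a))"
  unfolding closed_sequential_limits
proof (intro allI impI, elim conjE)
  fix x l
  assume "\<forall>k. x k \<in> range (infsum a)" and lim: "x \<longlonglongrightarrow> l"
  then have "\<forall>k. \<exists>B. x k = infsum a B"
    by blast
  then obtain A where A: "\<And>k. x k = infsum a (A k)"
    by metis
  define ind where "ind k m = (if m \<in> A k then 1 else 0 :: real)" for k m
  obtain r g where r: "strict_mono r" and g: "\<And>m. (\<lambda>k. ind (r k) m) \<longlonglongrightarrow> g m"
    by (rule bounded_seq_pointwise_convergent_subseq[of ind 1]) (auto simp: ind_def)
  have "eventually (\<lambda>k. m \<in> A (r k) \<longleftrightarrow> m \<in> {m. 1/2 < g m}) sequentially" for m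
  proof -
    have "eventually (\<lambda>k. dist (ind (r k) m) (g m) < 1/2) sequentially"
      by (rule tendstoD[OF g]) simp
    then show ?thesis
      unfolding ind_def dist_real_def abs_less_iff by eventually_elim (auto split: if_split_asm)
  qed
  then have "(\<lambda>k. x (r k)) \<longlonglongrightarrow> infsum a {m. 1/2 < g m}"
    unfolding A by (rule infsum_tendsto_if_eventually_agree[OF a])
  moreover have "(\<lambda>k. x (r k)) \<longlonglongrightarrow> l"
    using LIMSEQ_subseq_LIMSEQ[OF lim r] by (simp add: comp_def)
  ultimately show "l \<in> range (infsum a)"
    using LIMSEQ_unique by blast
qed

lemma compact_range_infsum:
  assumes "nonneg_summable a"
  shows "compact (range (infsum a))"
  unfolding compact_eq_bounded_closed
  using bounded_subset[OF bounded_closed_interval range_infsum_subset[OF assms]]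
    closed_range_infsum[OF assms] by blast

section \<open>Nonincreasing rearrangement\<close>

lemma nonneg_null_seq_attains_max_off_finite:
  fixes a :: "nat \<Rightarrow> real"
  assumes "a \<longlonglongrightarrow> 0" "\<And>n. 0 \<le> a n" "finite S"
  obtains m where "m \<notin> S" "\<And>j. j \<notin> S \<Longrightarrow> a j \<le> a m"
proof -
  obtain m0 where "m0 \<notin> S"
    using assms(3) ex_new_if_finite infinite_UNIV_nat by blast
  show thesis
  proof (cases "\<forall>j. j \<notin> S \<longrightarrow> a j \<le> a m0")
    case True
    with \<open>m0 \<notin> S\<close> that show ?thesis
      by blast
  next
    case False
    then obtain m1 where m1: "m1 \<notin> S" "a m0 < a m1"
      by force
    then have "0 < a m1"
      using assms(2)[of m0] by linarith
    define F where "F = {j. j \<notin> S \<and> a m1 \<le> a j}"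
    obtain N where "\<And>j. N \<le> j \<Longrightarrow> a j < a m1"
      using order_tendstoD(2)[OF assms(1) \<open>0 < a m1\<close>] unfolding eventually_sequentially by blast
    then have "F \<subseteq> {..<N}"
      unfolding F_def by (auto simp flip: not_le)
    then have "finite F"
      by (rule finite_subset) simp
    moreover have "m1 \<in> F"
      using m1 by (simp add: F_def)
    ultimately have "Max (a ` F) \<in> a ` F"
      by (intro Max_in) auto
    then obtain m where m: "m \<in> F" "a m = Max (a ` F)"
      by auto
    have max: "a j \<le> a m" if "j \<notin> S" for j
    proof (cases "j \<in> F")
      case True
      then show ?thesis
        using m \<open>finite F\<close> by simp
    next
      case False
      then show ?thesis
        using that m(1) by (simp add: F_def)
    qed
    have "m \<notin> S"
      using m(1) by (simp add: F_def)
    then show ?thesis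
      using max by (rule that)
  qed
qed

definition next_largest :: "(nat \<Rightarrow> real) \<Rightarrow> nat set \<Rightarrow> nat" where
  "next_largest a S = (SOME m. m \<notin> S \<and> (\<forall>j. j \<notin> S \<longrightarrow> a j \<le> a m))"

lemma next_largest_spec:
  assumes "nonneg_summable a" "finite S"
  shows "next_largest a S \<notin> S" and "\<And>j. j \<notin> S \<Longrightarrow> a j \<le> a (next_largest a S)"
proof -
  have "a \<longlonglongrightarrow> 0"
    using assms(1) by (simp add: nonneg_summable_def summable_LIMSEQ_zero)
  then obtain m where "m \<notin> S" "\<And>j. j \<notin> S \<Longrightarrow> a j \<le> a m"
    using nonneg_null_seq_attains_max_off_finite nonneg_summable_nonneg[OF assms(1)] assms(2)
    by blast
  then have "m \<notin> S \<and> (\<forall>j. j \<notin> S \<longrightarrow> a j \<le> a m)"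
    by blast
  then have "next_largest a S \<notin> S \<and> (\<forall>j. j \<notin> S \<longrightarrow> a j \<le> a (next_largest a S))"
    unfolding next_largest_def by (rule someI)
  then show "next_largest a S \<notin> S" and "\<And>j. j \<notin> S \<Longrightarrow> a j \<le> a (next_largest a S)"
    by auto
qed

primrec largest_indices :: "(nat \<Rightarrow> real) \<Rightarrow> nat \<Rightarrow> nat set" where
  "largest_indices a 0 = {}"
| "largest_indices a (Suc n) = insert (next_largest a (largest_indices a n)) (largest_indices a n)"

lemma largest_indices_eq_image:
  "largest_indices a n = (\<lambda>i. next_largest a (largest_indices a i)) ` {..<n}"
  by (induction n) (auto simp: lessThan_Suc)

lemma nonneg_summable_reindex:
  assumes "nonneg_summable a" "inj \<sigma>"
  shows "nonneg_summable (a \<circ> \<sigma>)"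
  using assms summable_on_reindex[of \<sigma> UNIV a] nonneg_summable_summable_on[of a "range \<sigma>"]
  by (simp add: nonneg_summable_iff_summable_on)

lemma decreasing_rearrangement:
  assumes a: "nonneg_summable a"
  obtains \<sigma> where "inj \<sigma>" "decseq (a \<circ> \<sigma>)" "{m. a m \<noteq> 0} \<subseteq> range \<sigma>"
proof
  define \<sigma> where "\<sigma> = (\<lambda>n. next_largest a (largest_indices a n))"
  have \<sigma>_rec: "\<sigma> n = next_largest a (\<sigma> ` {..<n})" for n
  proof -
    have "\<sigma> n = next_largest a (largest_indices a n)"
      by (simp only: \<sigma>_def)
    also have "largest_indices a n = \<sigma> ` {..<n}"
      unfolding \<sigma>_def by (rule largest_indices_eq_image)
    finally show ?thesis .
  qed
  have fresh: "\<sigma> n \<notin> \<sigma> ` {..<n}" and largest: "\<And>j. j \<notin> \<sigma> ` {..<n} \<Longrightarrow> a j \<le> a (\<sigma> n)" for n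
    using next_largest_spec[OF a, of "\<sigma> ` {..<n}"] by (simp_all flip: \<sigma>_rec)
  show inj: "inj \<sigma>"
    using fresh by (intro linorder_injI) (metis imageI lessThan_iff)
  show "decseq (a \<circ> \<sigma>)"
  proof (rule decseq_SucI)
    fix n
    have "\<sigma> (Suc n) \<notin> \<sigma> ` {..<n}"
      using fresh[of "Suc n"] by auto
    then show "(a \<circ> \<sigma>) (Suc n) \<le> (a \<circ> \<sigma>) n"
      using largest by simp
  qed
  show "{m. a m \<noteq> 0} \<subseteq> range \<sigma>"
  proof (rule subsetI, rule ccontr)
    fix m
    assume "m \<in> {m. a m \<noteq> 0}" "m \<notin> range \<sigma>"
    then have "0 < a m"
      using nonneg_summable_nonneg[OF a, of m] by simp
    moreover have "a m \<le> (a \<circ> \<sigma>) n" for n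
      using largest[of m n] \<open>m \<notin> range \<sigma>\<close> by auto
    moreover have "(a \<circ> \<sigma>) \<longlonglongrightarrow> 0"
      using nonneg_summable_reindex[OF a inj] by (simp add: nonneg_summable_def summable_LIMSEQ_zero)
    ultimately have "a m \<le> 0"
      using LIMSEQ_le_const by blast
    with \<open>0 < a m\<close> show False
      by simp
  qed
qed

lemma range_infsum_reindex:
  assumes "inj \<sigma>" "{m. a m \<noteq> 0} \<subseteq> range \<sigma>"
  shows "range (infsum (a \<circ> \<sigma>)) = range (infsum a)"
proof -
  have reindex: "infsum (a \<circ> \<sigma>) B = infsum a (\<sigma> ` B)" for B
    using assms(1) by (simp add: infsum_reindex inj_on_subset)
  have "infsum a A = infsum a (\<sigma> ` (\<sigma> -` A))" for A
    by (rule infsum_cong_neutral) (use assms(2) in auto)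
  then have preimage: "infsum a A = infsum (a \<circ> \<sigma>) (\<sigma> -` A)" for A
    by (simp add: reindex)
  show ?thesis
  proof (intro equalityI subsetI)
    fix x
    assume "x \<in> range (infsum (a \<circ> \<sigma>))"
    then show "x \<in> range (infsum a)"
      using reindex by auto
  next
    fix x
    assume "x \<in> range (infsum a)"
    then show "x \<in> range (infsum (a \<circ> \<sigma>))"
      using preimage by auto
  qed
qed

lemma decseq_nonneg_summable_bound:
  assumes "nonneg_summable b" "decseq b"
  shows "real (Suc n) * b n \<le> infsum b UNIV"
proof -
  have "real (card {..n}) * b n \<le> sum b {..n}"
    using assms(2) by (intro sum_bounded_below) (simp add: decseq_def)
  also have "\<dots> \<le> infsum b UNIV"
    using assms(1)
    by (intro finite_sum_le_infsum) (auto simp: nonneg_summable_summable_on nonneg_summable_nonneg)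
  finally show ?thesis
    by simp
qed

section \<open>Intervals and sums of achievement sets\<close>

lemma floor_double_real:
  fixes y :: real
  shows "\<lfloor>2 * y\<rfloor> = 2 * \<lfloor>y\<rfloor> + (if odd \<lfloor>2 * y\<rfloor> then 1 else 0)"
proof -
  have "2 * \<lfloor>y\<rfloor> \<le> \<lfloor>2 * y\<rfloor>" "\<lfloor>2 * y\<rfloor> \<le> 2 * \<lfloor>y\<rfloor> + 1"
    by linarith+
  then have "\<lfloor>2 * y\<rfloor> = 2 * \<lfloor>y\<rfloor> \<or> \<lfloor>2 * y\<rfloor> = 2 * \<lfloor>y\<rfloor> + 1"
    by linarith
  then show ?thesis
    by auto
qed

lemma sum_binary_digits:
  fixes t :: real
  assumes "0 \<le> t" "t < 1"
  shows "(\<Sum>n<N. if odd \<lfloor>2 ^ Suc n * t\<rfloor> then (1/2) ^ Suc n else 0) = \<lfloor>2 ^ N * t\<rfloor> / 2 ^ N"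
proof (induction N)
  case 0
  with assms show ?case
    by (simp add: floor_eq_iff)
next
  case (Suc N)
  have "real_of_int \<lfloor>2 ^ Suc N * t\<rfloor> = 2 * \<lfloor>2 ^ N * t\<rfloor> + (if odd \<lfloor>2 ^ Suc N * t\<rfloor> then 1 else 0)"
    using floor_double_real[of "2 ^ N * t"] by (simp add: mult.assoc)
  with Suc show ?case
    by (simp add: field_simps power_one_over)
qed

lemma infsum_binary_digits:
  fixes t :: real
  assumes "0 \<le> t" "t < 1"
  shows "infsum (\<lambda>n. (1/2) ^ Suc n) {n. odd \<lfloor>2 ^ Suc n * t\<rfloor>} = t"
proof -
  let ?g = "\<lambda>n. if odd \<lfloor>2 ^ Suc n * t\<rfloor> then (1/2::real) ^ Suc n else 0"
  have lower: "t - (1/2) ^ N \<le> \<lfloor>2 ^ N * t\<rfloor> / 2 ^ N" for N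
  proof -
    have "2 ^ N * t - 1 \<le> \<lfloor>2 ^ N * t\<rfloor>"
      by linarith
    then have "(2 ^ N * t - 1) / 2 ^ N \<le> \<lfloor>2 ^ N * t\<rfloor> / 2 ^ N"
      by (rule divide_right_mono) simp
    then show ?thesis
      by (simp add: diff_divide_distrib power_one_over)
  qed
  have upper: "\<lfloor>2 ^ N * t\<rfloor> / 2 ^ N \<le> t" for N
    using of_int_floor_le[of "2 ^ N * t"] by (simp add: pos_divide_le_eq mult.commute)
  have "(\<lambda>N. t - (1/2::real) ^ N) \<longlonglongrightarrow> t - 0"
    by (intro tendsto_diff tendsto_const LIMSEQ_power_zero) simp
  then have L: "(\<lambda>N. t - (1/2::real) ^ N) \<longlonglongrightarrow> t"
    by simp
  have "(\<lambda>N. \<lfloor>2 ^ N * t\<rfloor> / 2 ^ N) \<longlonglongrightarrow> t"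
    by (rule real_tendsto_sandwich[OF always_eventually always_eventually L tendsto_const])
      (blast intro: lower upper)+
  then have "?g sums t"
    unfolding sums_def sum_binary_digits[OF assms] .
  then have "infsum ?g UNIV = t"
    by (rule infsumI[OF sums_nonneg_imp_has_sum]) simp
  moreover have "infsum ?g UNIV = infsum (\<lambda>n. (1/2) ^ Suc n) {n. odd \<lfloor>2 ^ Suc n * t\<rfloor>}"
    by (rule infsum_cong_neutral) auto
  ultimately show ?thesis
    by simp
qed

lemma range_infsum_half_powers: "range (infsum (\<lambda>n. (1/2::real) ^ Suc n)) = {0..1}"
proof
  let ?h = "\<lambda>n. (1/2::real) ^ Suc n"
  have "(\<lambda>n. (1/2::real) ^ n) sums 2"
    using geometric_sums[of "1/2::real"] by simp
  then have "?h sums 1"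
    using sums_mult[of _ 2 "1/2::real"] by simp
  then have h: "nonneg_summable ?h"
    by (simp add: nonneg_summable_def sums_summable)
  have total: "infsum ?h UNIV = 1"
    using sums_unique2[OF nonneg_summable_sums_infsum[OF h] \<open>?h sums 1\<close>] .
  show "range (infsum ?h) \<subseteq> {0..1}"
    using range_infsum_subset[OF h] by (simp only: total)
  show "{0..1} \<subseteq> range (infsum ?h)"
  proof
    fix t :: real
    assume "t \<in> {0..1}"
    then consider "t = 1" | "0 \<le> t" "t < 1"
      by fastforce
    then show "t \<in> range (infsum ?h)"
    proof cases
      case 1
      then show ?thesis
        using rangeI[of "infsum ?h" UNIV] total by simp
    next
      case 2
      then show ?thesis
        using rangeI[of "infsum ?h"] infsum_binary_digits[OF 2] by metis
    qed
  qed
qed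

lemma range_infsum_cmult:
  fixes a :: "nat \<Rightarrow> real"
  shows "range (infsum (\<lambda>n. c * a n)) = (*) c ` range (infsum a)"
proof -
  have "infsum (\<lambda>n. c * a n) = (\<lambda>A. c * infsum a A)"
    by (rule ext) (rule infsum_cmult_right')
  then show ?thesis
    by (simp add: image_image)
qed

lemma nonneg_summable_geometric:
  "0 \<le> d \<Longrightarrow> nonneg_summable (\<lambda>n. d * (1/2::real) ^ Suc n)"
  by (simp add: nonneg_summable_def summable_mult)

lemma range_infsum_geometric:
  assumes "0 \<le> d"
  shows "range (infsum (\<lambda>n. d * (1/2::real) ^ Suc n)) = {0..d}"
proof -
  have "range (infsum (\<lambda>n. d * (1/2::real) ^ Suc n)) = (*) d ` {0..1}"
    by (simp only: range_infsum_cmult range_infsum_half_powers)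
  with assms show ?thesis
    by (simp add: image_mult_atLeastAtMost_if)
qed

lemma even_image_disjoint_odd_image: "(\<lambda>m::nat. 2 * m) ` X \<inter> (\<lambda>m. Suc (2 * m)) ` Y = {}"
  by auto presburger

lemma range_even_Un_range_odd: "range (\<lambda>m::nat. 2 * m) \<union> range (\<lambda>m. Suc (2 * m)) = UNIV"
proof -
  have "n \<in> range (\<lambda>m. 2 * m) \<union> range (\<lambda>m. Suc (2 * m))" for n
    by (cases "even n") (auto elim!: evenE oddE)
  then show ?thesis
    by blast
qed

definition interleave :: "(nat \<Rightarrow> 'a) \<Rightarrow> (nat \<Rightarrow> 'a) \<Rightarrow> nat \<Rightarrow> 'a" where
  "interleave a c n = (if even n then a (n div 2) else c (n div 2))"

lemma
  assumes a: "nonneg_summable a" and c: "nonneg_summable c"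
  shows nonneg_summable_interleave: "nonneg_summable (interleave a c)"
    and range_infsum_interleave:
      "range (infsum (interleave a c)) = {x + y | x y. x \<in> range (infsum a) \<and> y \<in> range (infsum c)}"
proof -
  let ?b = "interleave a c" and ?ev = "\<lambda>m::nat. 2 * m" and ?od = "\<lambda>m::nat. Suc (2 * m)"
  have inj: "inj_on ?ev X" "inj_on ?od X" for X
    by (simp_all add: inj_on_def)
  have "?b \<circ> ?ev = a" "?b \<circ> ?od = c"
    by (simp_all add: fun_eq_iff interleave_def)
  then have summable: "?b summable_on ?ev ` X" "?b summable_on ?od ` X"
    and infsum: "infsum ?b (?ev ` X) = infsum a X" "infsum ?b (?od ` Y) = infsum c Y" for X Y
    using a c by (simp_all add: summable_on_reindex infsum_reindex inj nonneg_summable_summable_on)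
  have split: "?ev ` (?ev -` B) \<union> ?od ` (?od -` B) = B" for B
    unfolding image_vimage_eq using range_even_Un_range_odd by blast
  have decompose: "infsum ?b B = infsum a (?ev -` B) + infsum c (?od -` B)" for B
  proof -
    have "infsum ?b B = infsum ?b (?ev ` (?ev -` B) \<union> ?od ` (?od -` B))"
      by (simp only: split)
    also have "\<dots> = infsum a (?ev -` B) + infsum c (?od -` B)"
      by (simp only: infsum_Un_disjoint[OF summable even_image_disjoint_odd_image] infsum)
    finally show ?thesis .
  qed
  have compose: "infsum ?b (?ev ` X \<union> ?od ` Y) = infsum a X + infsum c Y" for X Y
    by (simp only: infsum_Un_disjoint[OF summable even_image_disjoint_odd_image] infsum)
  show "range (infsum ?b) = {x + y | x y. x \<in> range (infsum a) \<and> y \<in> range (infsum c)}"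
  proof (intro equalityI subsetI)
    fix z
    assume "z \<in> range (infsum ?b)"
    then show "z \<in> {x + y | x y. x \<in> range (infsum a) \<and> y \<in> range (infsum c)}"
      using decompose by blast
  next
    fix z
    assume "z \<in> {x + y | x y. x \<in> range (infsum a) \<and> y \<in> range (infsum c)}"
    then obtain X Y where "z = infsum a X + infsum c Y"
      by blast
    then show "z \<in> range (infsum ?b)"
      by (simp only: compose[symmetric] rangeI)
  qed
  have "?b summable_on UNIV"
    using summable_on_Un_disjoint[OF summable even_image_disjoint_odd_image, of UNIV UNIV] by (simp only: range_even_Un_range_odd)
  then show "nonneg_summable ?b"
    using a c by (simp add: nonneg_summable_iff_summable_on interleave_def nonneg_summable_nonneg)
qed

lemma achievement_familyE:
  assumes "E \<in> achievement_family"
  obtains \<alpha> where "nonneg_summable \<alpha>" "decseq \<alpha>" "E = range (infsum \<alpha>)" "E \<subseteq> {0..1}"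
proof -
  obtain a where a: "summable (\<lambda>n. \<bar>a n\<bar>)" "E = achievement_set a" "E \<subseteq> {0..1}"
    using assms unfolding achievement_family_def by blast
  have E: "E = range (infsum a)"
    using a(1,2) achievement_set_eq_range_infsum by simp
  have "a n \<in> E" for n
    using E rangeI[of "infsum a" "{n}"] by simp
  then have "0 \<le> a n" for n
    using a(3) by (meson atLeastAtMost_iff subsetD)
  then have nonneg: "nonneg_summable a"
    using summable_rabs_cancel[OF a(1)] by (simp add: nonneg_summable_def)
  obtain \<sigma> where \<sigma>: "inj \<sigma>" "decseq (a \<circ> \<sigma>)" "{m. a m \<noteq> 0} \<subseteq> range \<sigma>"
    using decreasing_rearrangement[OF nonneg] by blast
  show thesis
  proof (rule that[of "a \<circ> \<sigma>"])
    show "nonneg_summable (a \<circ> \<sigma>)"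
      using nonneg \<sigma>(1) by (rule nonneg_summable_reindex)
    show "E = range (infsum (a \<circ> \<sigma>))"
      using range_infsum_reindex[OF \<sigma>(1,3)] E by simp
  qed (use \<sigma>(2) a(3) in auto)
qed

lemma range_infsum_in_achievement_family:
  assumes "nonneg_summable a" "range (infsum a) \<subseteq> {0..1}"
  shows "range (infsum a) \<in> achievement_family"
proof -
  have "summable (\<lambda>n. \<bar>a n\<bar>)"
    using assms(1) by (simp add: nonneg_summable_def)
  with assms(2) show ?thesis
    unfolding achievement_family_def using achievement_set_eq_range_infsum by blast
qed

lemma sumset_interval_in_achievement_family:
  assumes a: "nonneg_summable a" and d: "0 \<le> d"
    and "{u + v | u v. u \<in> range (infsum a) \<and> v \<in> {0..d}} \<subseteq> {0..1}"
  shows "{u + v | u v. u \<in> range (infsum a) \<and> v \<in> {0..d}} \<in> achievement_family"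
proof -
  let ?c = "\<lambda>n. d * (1/2::real) ^ Suc n"
  have "range (infsum (interleave a ?c)) = {u + v | u v. u \<in> range (infsum a) \<and> v \<in> {0..d}}"
    using range_infsum_interleave[OF a nonneg_summable_geometric[OF d]] range_infsum_geometric[OF d]
    by simp
  then show ?thesis
    using range_infsum_in_achievement_family[OF nonneg_summable_interleave[OF a nonneg_summable_geometric[OF d]]]
      assms(3) by simp
qed

lemma achievement_family_subset_K0_01: "achievement_family \<subseteq> K0_01"
proof
  fix E
  assume "E \<in> achievement_family"
  then obtain \<alpha> where "nonneg_summable \<alpha>" "E = range (infsum \<alpha>)" "E \<subseteq> {0..1}"
    by (rule achievement_familyE)
  moreover have "0 \<in> range (infsum \<alpha>)"
    by (metis infsum_empty rangeI)
  ultimately show "E \<in> K0_01"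
    unfolding K0_01_def using compact_range_infsum by blast
qed

lemma K0_01_subset_K01: "K0_01 \<subseteq> K01"
  unfolding K0_01_def K01_def by blast

lemma achievement_family_approximants:
  assumes "\<forall>e>0. \<exists>E\<in>achievement_family. hausdorff_dist K E < e"
  obtains \<alpha> where "\<And>k. nonneg_summable (\<alpha> k)" "\<And>k. range (infsum (\<alpha> k)) \<subseteq> {0..1}"
    "\<And>k m. \<alpha> k m \<le> inverse (Suc m)" "\<And>k. hausdorff_dist K (range (infsum (\<alpha> k))) < inverse (Suc k)"
proof -
  have "\<exists>\<alpha>. nonneg_summable \<alpha> \<and> range (infsum \<alpha>) \<subseteq> {0..1} \<and> (\<forall>m. \<alpha> m \<le> inverse (Suc m)) \<and>
      hausdorff_dist K (range (infsum \<alpha>)) < inverse (Suc k)" for k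
  proof -
    obtain E where "E \<in> achievement_family" "hausdorff_dist K E < inverse (Suc k)"
      using assms by (metis inverse_positive_iff_positive of_nat_0_less_iff zero_less_Suc)
    moreover from this(1) obtain \<alpha> where
      \<alpha>: "nonneg_summable \<alpha>" "decseq \<alpha>" "E = range (infsum \<alpha>)" "E \<subseteq> {0..1}"
      by (rule achievement_familyE)
    moreover have "\<alpha> m \<le> inverse (Suc m)" for m
    proof -
      have "real (Suc m) * \<alpha> m \<le> infsum \<alpha> UNIV"
        using \<alpha>(1,2) by (rule decseq_nonneg_summable_bound)
      also have "\<dots> \<le> 1"
        using \<alpha>(3,4) rangeI[of "infsum \<alpha>" UNIV] by (meson atLeastAtMost_iff subsetD)
      finally show ?thesis
        by (simp add: field_simps)
    qed
    ultimately show ?thesis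
      by blast
  qed
  then show thesis
    using that by metis
qed

lemma hausdorff_dist_commute: "hausdorff_dist A B = hausdorff_dist B A"
  by (simp add: hausdorff_dist_def max.commute)

lemma hausdorff_dist_less_imp_near:
  assumes "bounded K" "E \<noteq> {}" "hausdorff_dist K E < e" "x \<in> K"
  obtains y where "y \<in> E" "dist x y < e"
proof -
  obtain y0 where "y0 \<in> E"
    using assms(2) by blast
  obtain B where B: "\<And>x. x \<in> K \<Longrightarrow> \<bar>x\<bar> \<le> B"
    using assms(1) by (auto simp: bounded_real)
  have "infdist x' E \<le> B + \<bar>y0\<bar>" if "x' \<in> K" for x'
    using infdist_le[OF \<open>y0 \<in> E\<close>, of x'] B[OF that] by (simp add: dist_real_def)
  then have "infdist x E \<le> (SUP x\<in>K. infdist x E)"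
    by (intro cSUP_upper assms(4) bdd_aboveI2)
  also have "\<dots> < e"
    using assms(3) by (simp add: hausdorff_dist_def)
  finally have "(INF y\<in>E. dist x y) < e"
    by (simp add: infdist_notempty assms(2))
  then show thesis
    using that by (simp add: cINF_less_iff assms(2)) blast
qed

lemma hausdorff_dist_less_imp_mutually_near:
  assumes "bounded K" "bounded E" "K \<noteq> {}" "E \<noteq> {}" "hausdorff_dist K E < e"
  shows "(\<forall>x\<in>K. \<exists>y\<in>E. dist x y < e) \<and> (\<forall>y\<in>E. \<exists>x\<in>K. dist x y < e)"
proof -
  have "hausdorff_dist E K < e"
    using assms(5) by (simp add: hausdorff_dist_commute)
  then show ?thesis
    using hausdorff_dist_less_imp_near[OF assms(1,4,5)] hausdorff_dist_less_imp_near[OF assms(2,3)]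
    by (metis dist_commute)
qed

section \<open>Termwise limits of series\<close>

locale termwise_limit =
  fixes \<beta> :: "nat \<Rightarrow> nat \<Rightarrow> real" and a :: "nat \<Rightarrow> real" and s :: real
  assumes nonneg_summable: "\<And>k. nonneg_summable (\<beta> k)"
    and termwise: "\<And>m. (\<lambda>k. \<beta> k m) \<longlonglongrightarrow> a m"
    and total: "(\<lambda>k. infsum (\<beta> k) UNIV) \<longlonglongrightarrow> s"
begin

lemma partial_sum_le_total_limit: "sum a {..<n} \<le> s"
proof (rule LIMSEQ_le[OF _ total])
  show "(\<lambda>k. sum (\<beta> k) {..<n}) \<longlonglongrightarrow> sum a {..<n}"
    by (intro tendsto_sum termwise)
  show "\<exists>N. \<forall>k\<ge>N. sum (\<beta> k) {..<n} \<le> infsum (\<beta> k) UNIV"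
    using nonneg_summable
    by (auto intro!: finite_sum_le_infsum simp: nonneg_summable_summable_on nonneg_summable_nonneg)
qed

lemma nonneg_summable_limit: "nonneg_summable a"
proof -
  have "0 \<le> a m" for m
    by (rule LIMSEQ_le_const[OF termwise]) (use nonneg_summable_nonneg[OF nonneg_summable] in auto)
  then show ?thesis
    unfolding nonneg_summable_def using partial_sum_le_total_limit
    by (auto intro: summableI_nonneg_bounded)
qed

definition escaped_mass :: real where
  "escaped_mass = s - infsum a UNIV"

lemma escaped_mass_nonneg: "0 \<le> escaped_mass"
proof -
  have "(\<lambda>n. sum a {..<n}) \<longlonglongrightarrow> infsum a UNIV"
    using nonneg_summable_sums_infsum[OF nonneg_summable_limit] by (simp add: sums_def)
  then have "infsum a UNIV \<le> s"
    by (rule LIMSEQ_le_const2) (use partial_sum_le_total_limit in auto)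
  then show ?thesis
    by (simp add: escaped_mass_def)
qed

lemma tail_tendsto: "(\<lambda>k. infsum (\<beta> k) {n..}) \<longlonglongrightarrow> escaped_mass + infsum a {n..}"
proof -
  have "(\<lambda>k. infsum (\<beta> k) UNIV - sum (\<beta> k) {..<n}) \<longlonglongrightarrow> s - sum a {..<n}"
    by (intro tendsto_diff total tendsto_sum termwise)
  then show ?thesis
    by (simp add: infsum_atLeast_eq nonneg_summable nonneg_summable_limit escaped_mass_def)
qed

lemma eventually_sums_close:
  assumes "e > 0"
  shows "eventually (\<lambda>k. \<forall>B\<subseteq>{..<n}. \<bar>sum (\<beta> k) B - sum a B\<bar> < e) sequentially"
proof -
  have "(\<lambda>k. \<Sum>m<n. \<bar>\<beta> k m - a m\<bar>) \<longlonglongrightarrow> 0"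
    by (intro tendsto_null_sum tendsto_rabs_zero LIM_zero termwise)
  from order_tendstoD(2)[OF this assms]
  show ?thesis
  proof eventually_elim
    case (elim k)
    have bound: "\<bar>sum (\<beta> k) B - sum a B\<bar> \<le> (\<Sum>m<n. \<bar>\<beta> k m - a m\<bar>)" if "B \<subseteq> {..<n}" for B
    proof -
      have "\<bar>sum (\<beta> k) B - sum a B\<bar> \<le> (\<Sum>m\<in>B. \<bar>\<beta> k m - a m\<bar>)"
        unfolding sum_subtractf[symmetric] by (rule sum_abs)
      also have "\<dots> \<le> (\<Sum>m<n. \<bar>\<beta> k m - a m\<bar>)"
        using that by (intro sum_mono2) auto
      finally show ?thesis .
    qed
    show ?case
      using bound elim by (blast intro: order.strict_trans1)
  qed
qed

definition limit_set :: "real set" where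
  "limit_set = {u + v | u v. u \<in> range (infsum a) \<and> v \<in> {0..escaped_mass}}"

lemma closed_limit_set: "closed limit_set"
  unfolding limit_set_def
  using compact_sums[OF compact_range_infsum[OF nonneg_summable_limit] compact_Icc]
  by (rule compact_imp_closed)

lemma subsum_near_limit_set:
  assumes y: "y \<in> range (infsum (\<beta> k))"
    and close: "\<forall>B\<subseteq>{..<n}. \<bar>sum (\<beta> k) B - sum a B\<bar> < h"
    and tail: "infsum (\<beta> k) {n..} < escaped_mass + infsum a {n..} + h"
    and n: "infsum a {n..} < h"
  shows "\<exists>z\<in>limit_set. dist z y < 3 * h"
proof -
  obtain A where A: "y = infsum (\<beta> k) A"
    using y by blast
  define w where "w = infsum (\<beta> k) (A \<inter> {n..})"
  have y_split: "y = sum (\<beta> k) (A \<inter> {..<n}) + w"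
    unfolding A w_def by (rule infsum_split_at[OF nonneg_summable])
  have w: "0 \<le> w" "w \<le> infsum (\<beta> k) {n..}"
    unfolding w_def using nonneg_summable
    by (auto intro: infsum_nonneg_summable_nonneg infsum_nonneg_summable_mono)
  define z where "z = sum a (A \<inter> {..<n}) + min w escaped_mass"
  have "sum a (A \<inter> {..<n}) \<in> range (infsum a)"
    using rangeI[of "infsum a" "A \<inter> {..<n}"] by simp
  then have "z \<in> limit_set"
    using w escaped_mass_nonneg unfolding z_def limit_set_def by fastforce
  moreover have "w - min w escaped_mass < 2 * h"
    using w(2) tail n infsum_nonneg_summable_nonneg[OF nonneg_summable_limit, of "{n..}"]
    by (simp add: min_def)
  then have "dist z y < 3 * h"
    using close[rule_format, of "A \<inter> {..<n}"] w
    unfolding dist_real_def y_split z_def by (simp add: abs_less_iff min_def)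
  ultimately show ?thesis
    by blast
qed

lemma limit_point_mem_limit_set:
  assumes near: "\<And>e. e > 0 \<Longrightarrow> eventually (\<lambda>k. \<exists>y\<in>range (infsum (\<beta> k)). dist x y < e) sequentially"
  shows "x \<in> limit_set"
proof -
  have "\<exists>z\<in>limit_set. dist z x < e" if "e > 0" for e
  proof -
    define h where "h = e / 4"
    have "h > 0"
      using that by (simp add: h_def)
    obtain n where n: "infsum a {n..} < h"
      using eventually_happens'[OF sequentially_bot
          order_tendstoD(2)[OF infsum_atLeast_tendsto_0[OF nonneg_summable_limit] \<open>h > 0\<close>]]
      by blast
    have "eventually (\<lambda>k. infsum (\<beta> k) {n..} < escaped_mass + infsum a {n..} + h) sequentially"
      using \<open>h > 0\<close> by (intro order_tendstoD(2)[OF tail_tendsto]) simp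
    from eventually_happens'[OF sequentially_bot
        eventually_conj[OF near[OF \<open>h > 0\<close>] eventually_conj[OF eventually_sums_close[OF \<open>h > 0\<close>] this]]]
    obtain k y where y: "y \<in> range (infsum (\<beta> k))" "dist x y < h"
      and close: "\<forall>B\<subseteq>{..<n}. \<bar>sum (\<beta> k) B - sum a B\<bar> < h"
      and tail: "infsum (\<beta> k) {n..} < escaped_mass + infsum a {n..} + h"
      by blast
    then obtain z where "z \<in> limit_set" "dist z y < 3 * h"
      using subsum_near_limit_set[OF y(1) close tail n] by blast
    moreover from this have "dist z x < e"
      using y(2) dist_triangle[of z x y] by (simp add: h_def dist_commute)
    ultimately show ?thesis
      by blast
  qed
  then show ?thesis
    using closed_approachable[OF closed_limit_set] by blast
qed

lemma limit_set_near_subsum: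
  assumes z: "z \<in> limit_set" and "h > 0"
    and close: "\<forall>B\<subseteq>{..<n}. \<bar>sum (\<beta> k) B - sum a B\<bar> < h"
    and tail: "escaped_mass + infsum a {n..} - h < infsum (\<beta> k) {n..}"
    and n: "infsum a {n..} < h" and small: "\<And>m. n \<le> m \<Longrightarrow> \<beta> k m \<le> h"
  shows "\<exists>y\<in>range (infsum (\<beta> k)). dist y z < 4 * h"
proof -
  obtain A v where z_eq: "z = infsum a A + v" and v: "0 \<le> v" "v \<le> escaped_mass"
    using z unfolding limit_set_def by auto
  (* v is matched by a block of consecutive tail terms of \<beta> k, each at most h;
     v' caps v by the tail mass actually available. *)
  define v' where "v' = min v (infsum (\<beta> k) {n..})"
  have "0 \<le> v'" "v' \<le> infsum (\<beta> k) {n..}"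
    using v infsum_nonneg_summable_nonneg[OF nonneg_summable] by (auto simp: v'_def)
  with nonneg_summable \<open>h > 0\<close> small
  obtain N where N: "n \<le> N" "v' - h < sum (\<beta> k) {n..<N}" "sum (\<beta> k) {n..<N} \<le> v'"
    by (rule greedy_partial_sum)
  define y where "y = sum (\<beta> k) (A \<inter> {..<n}) + sum (\<beta> k) {n..<N}"
  have "sum (\<beta> k) ((A \<inter> {..<n}) \<union> {n..<N}) = y"
    unfolding y_def by (rule sum.union_disjoint) auto
  then have y: "y \<in> range (infsum (\<beta> k))"
    using rangeI[of "infsum (\<beta> k)" "(A \<inter> {..<n}) \<union> {n..<N}"] by simp
  have "v - h < v'" "v' \<le> v"
    using tail v infsum_nonneg_summable_nonneg[OF nonneg_summable_limit, of "{n..}"] \<open>h > 0\<close>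
    by (simp_all add: v'_def)
  moreover have "0 \<le> infsum a (A \<inter> {n..})" "infsum a (A \<inter> {n..}) \<le> infsum a {n..}"
    using nonneg_summable_limit
    by (auto intro: infsum_nonneg_summable_nonneg infsum_nonneg_summable_mono)
  moreover have "z = sum a (A \<inter> {..<n}) + infsum a (A \<inter> {n..}) + v"
    unfolding z_eq by (simp add: infsum_split_at[OF nonneg_summable_limit, of A n])
  ultimately have "dist y z < 4 * h"
    using close[rule_format, of "A \<inter> {..<n}"] N(2,3) n
    unfolding dist_real_def y_def by (simp add: abs_less_iff)
  with y show ?thesis
    by blast
qed

lemma limit_set_point_is_limit:
  assumes small: "\<And>e. e > 0 \<Longrightarrow> eventually (\<lambda>n. \<forall>k m. n \<le> m \<longrightarrow> \<beta> k m \<le> e) sequentially"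
    and z: "z \<in> limit_set" and "e > 0"
  shows "eventually (\<lambda>k. \<exists>y\<in>range (infsum (\<beta> k)). dist y z < e) sequentially"
proof -
  define h where "h = e / 4"
  have "h > 0"
    using \<open>e > 0\<close> by (simp add: h_def)
  obtain n where n: "infsum a {n..} < h" and small_n: "\<And>k m. n \<le> m \<Longrightarrow> \<beta> k m \<le> h"
    using eventually_happens'[OF sequentially_bot eventually_conj[OF
          order_tendstoD(2)[OF infsum_atLeast_tendsto_0[OF nonneg_summable_limit] \<open>h > 0\<close>]
          small[OF \<open>h > 0\<close>]]]
    by blast
  have "eventually (\<lambda>k. escaped_mass + infsum a {n..} - h < infsum (\<beta> k) {n..}) sequentially"
    using \<open>h > 0\<close> by (intro order_tendstoD(1)[OF tail_tendsto]) simp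
  with eventually_sums_close[OF \<open>h > 0\<close>, of n]
  show ?thesis
  proof eventually_elim
    case (elim k)
    then show ?case
      using limit_set_near_subsum[OF z \<open>h > 0\<close> elim n small_n] by (simp add: h_def)
  qed
qed

lemma hausdorff_limit_eq_limit_set:
  assumes "closed K"
    and near: "\<And>e. e > 0 \<Longrightarrow> eventually (\<lambda>k. (\<forall>x\<in>K. \<exists>y\<in>range (infsum (\<beta> k)). dist x y < e) \<and>
        (\<forall>y\<in>range (infsum (\<beta> k)). \<exists>x\<in>K. dist x y < e)) sequentially"
    and small: "\<And>e. e > 0 \<Longrightarrow> eventually (\<lambda>n. \<forall>k m. n \<le> m \<longrightarrow> \<beta> k m \<le> e) sequentially"
  shows "K = limit_set"
proof (intro equalityI subsetI)
  fix x
  assume "x \<in> K"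
  show "x \<in> limit_set"
  proof (rule limit_point_mem_limit_set)
    fix e :: real
    assume "e > 0"
    from near[OF this] show "eventually (\<lambda>k. \<exists>y\<in>range (infsum (\<beta> k)). dist x y < e) sequentially"
      by eventually_elim (use \<open>x \<in> K\<close> in blast)
  qed
next
  fix z
  assume z: "z \<in> limit_set"
  have "\<exists>x\<in>K. dist x z < e" if "e > 0" for e
  proof -
    have "e / 2 > 0"
      using that by simp
    from eventually_happens'[OF sequentially_bot
        eventually_conj[OF near[OF this] limit_set_point_is_limit[OF small z this]]]
    obtain x y where "x \<in> K" "dist x y < e / 2" "dist y z < e / 2"
      by blast
    moreover from this have "dist x z < e"
      using dist_triangle[of x z y] by linarith
    ultimately show ?thesis
      by blast
  qed
  then show "z \<in> K"
    using closed_approachable[OF \<open>closed K\<close>] by blast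
qed
end

lemma convergent_subseq_termwise_limit:
  fixes \<alpha> :: "nat \<Rightarrow> nat \<Rightarrow> real"
  assumes nonneg: "\<And>k. nonneg_summable (\<alpha> k)" and bounded: "\<And>k. infsum (\<alpha> k) UNIV \<le> M"
  obtains r a s where "strict_mono r" "termwise_limit (\<lambda>k. \<alpha> (r k)) a s"
proof -
  have bound: "\<bar>\<alpha> k m\<bar> \<le> M" for k m
  proof -
    have "\<alpha> k m = infsum (\<alpha> k) {m}"
      by simp
    also have "\<dots> \<le> M"
      using infsum_nonneg_summable_mono[OF nonneg[of k], of "{m}" UNIV] bounded[of k] by simp
    finally show ?thesis
      using nonneg_summable_nonneg[OF nonneg] by simp
  qed
  obtain r1 a where r1: "strict_mono r1" and termwise: "\<And>m. (\<lambda>k. \<alpha> (r1 k) m) \<longlonglongrightarrow> a m"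
    using bounded_seq_pointwise_convergent_subseq[of \<alpha> M, OF bound] by blast
  have "\<forall>k. infsum (\<alpha> (r1 k)) UNIV \<in> {0..M}"
    using infsum_nonneg_summable_nonneg[OF nonneg] bounded by simp
  then obtain s r2 where "s \<in> {0..M}" and r2: "strict_mono r2"
    and total: "((\<lambda>k. infsum (\<alpha> (r1 k)) UNIV) \<circ> r2) \<longlonglongrightarrow> s"
    by (rule seq_compactE[OF compact_imp_seq_compact[OF compact_Icc]])
  show thesis
  proof (rule that)
    show "strict_mono (r1 \<circ> r2)"
      using r1 r2 by (rule strict_mono_o)
    show "termwise_limit (\<lambda>k. \<alpha> ((r1 \<circ> r2) k)) a s"
    proof
      show "nonneg_summable (\<alpha> ((r1 \<circ> r2) k))" for k
        by (rule nonneg)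
      show "(\<lambda>k. \<alpha> ((r1 \<circ> r2) k) m) \<longlonglongrightarrow> a m" for m
        using LIMSEQ_subseq_LIMSEQ[OF termwise r2] by (simp add: comp_def)
      show "(\<lambda>k. infsum (\<alpha> ((r1 \<circ> r2) k)) UNIV) \<longlonglongrightarrow> s"
        using total by (simp add: comp_def)
    qed
  qed
qed

section \<open>Closedness of the family\<close>

lemma eventually_uniformly_small:
  fixes \<alpha> :: "nat \<Rightarrow> nat \<Rightarrow> real"
  assumes "\<And>k m. \<alpha> k m \<le> inverse (Suc m)" and "e > 0"
  shows "eventually (\<lambda>n. \<forall>k m. n \<le> m \<longrightarrow> \<alpha> k m \<le> e) sequentially"
  using order_tendstoD(2)[OF LIMSEQ_inverse_real_of_nat \<open>e > 0\<close>]
proof eventually_elim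
  case (elim n)
  have "\<alpha> k m \<le> e" if "n \<le> m" for k m
  proof -
    have "inverse (real (Suc m)) \<le> inverse (real (Suc n))"
      using that by (intro le_imp_inverse_le) auto
    then show ?thesis
      using assms(1)[of k m] elim by linarith
  qed
  then show ?case
    by blast
qed

lemma eventually_mutually_near_subseq:
  assumes K: "K \<in> K01" and "strict_mono r"
    and "\<And>k. E k \<subseteq> {0..1}" "\<And>k. E k \<noteq> {}" "\<And>k. hausdorff_dist K (E k) < inverse (Suc k)"
    and "e > 0"
  shows "eventually (\<lambda>k. (\<forall>x\<in>K. \<exists>y\<in>E (r k). dist x y < e) \<and> (\<forall>y\<in>E (r k). \<exists>x\<in>K. dist x y < e))
    sequentially"
  using order_tendstoD(2)[OF LIMSEQ_inverse_real_of_nat \<open>e > 0\<close>]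
proof eventually_elim
  case (elim k)
  have "inverse (real (Suc (r k))) \<le> inverse (Suc k)"
    using seq_suble[OF \<open>strict_mono r\<close>, of k] by (simp add: le_imp_inverse_le)
  then have "hausdorff_dist K (E (r k)) < e"
    using assms(5)[of "r k"] elim by linarith
  then show ?case
    using K bounded_subset[OF bounded_closed_interval assms(3)] assms(4)
    by (intro hausdorff_dist_less_imp_mutually_near) (auto simp: K01_def compact_imp_bounded)
qed

lemma achievement_family_closed_in_K01:
  assumes K: "K \<in> K01" and approx: "\<forall>e>0. \<exists>E\<in>achievement_family. hausdorff_dist K E < e"
  shows "K \<in> achievement_family"
proof -
  obtain \<alpha> where \<alpha>: "\<And>k. nonneg_summable (\<alpha> k)" "\<And>k. range (infsum (\<alpha> k)) \<subseteq> {0..1}"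
    "\<And>k m. \<alpha> k m \<le> inverse (Suc m)" "\<And>k. hausdorff_dist K (range (infsum (\<alpha> k))) < inverse (Suc k)"
    using achievement_family_approximants[OF approx] by blast
  have "infsum (\<alpha> k) UNIV \<le> 1" for k
    using \<alpha>(2)[of k] rangeI[of "infsum (\<alpha> k)" UNIV] by (meson atLeastAtMost_iff subsetD)
  with \<alpha>(1) obtain r a s where r: "strict_mono r" and lim: "termwise_limit (\<lambda>k. \<alpha> (r k)) a s"
    by (rule convergent_subseq_termwise_limit)
  interpret termwise_limit "\<lambda>k. \<alpha> (r k)" a s
    by (fact lim)
  have "K = limit_set"
  proof (rule hausdorff_limit_eq_limit_set)
    show "closed K"
      using K by (simp add: K01_def compact_imp_closed)
    show "eventually (\<lambda>k. (\<forall>x\<in>K. \<exists>y\<in>range (infsum (\<alpha> (r k))). dist x y < e) \<and>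
        (\<forall>y\<in>range (infsum (\<alpha> (r k))). \<exists>x\<in>K. dist x y < e)) sequentially" if "e > 0" for e
      by (rule eventually_mutually_near_subseq[OF K r \<alpha>(2) _ \<alpha>(4) that]) simp
    show "eventually (\<lambda>n. \<forall>k m. n \<le> m \<longrightarrow> \<alpha> (r k) m \<le> e) sequentially" if "e > 0" for e
      using \<alpha>(3) that by (rule eventually_uniformly_small)
  qed
  also have "\<dots> \<in> achievement_family"
    unfolding limit_set_def
    using nonneg_summable_limit escaped_mass_nonneg
  proof (rule sumset_interval_in_achievement_family)
    show "{u + v | u v. u \<in> range (infsum a) \<and> v \<in> {0..escaped_mass}} \<subseteq> {0..1}"
      using calculation K by (simp add: K01_def limit_set_def)
  qed
  finally show ?thesis .
qed

theorem theorem4p5: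
  shows "hclosed_in achievement_family K0_01 \<and> hclosed_in achievement_family K01"
  using achievement_family_subset_K0_01 K0_01_subset_K01 achievement_family_closed_in_K01
  unfolding hclosed_in_def by blast

end
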